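(* Let $X$ be a compact metrizable countable space and $f:X\to X$ a continuous function such that $(X,f)$ is transitive. If either $f^p$ is continuous for every $p\in\mathbb N^*$, or $|\omega_f(x)|=1$ for every accumulation point $x$ of $X$, then the Ellis semigroup $E(X,f)$ is homeomorphic to $X$.
   Context: $(X,f)$ is transitive if some point has dense orbit $\{f^n(x):n\in\mathbb N\}$. $\mathbb N^*$ is the set of free ultrafilters on $\mathbb N$; for $p\in\beta\mathbb N$ the $p$-iterate is $f^p(x)=p\text{-}\lim_{n\to\infty}f^n(x)$, where $y=p\text{-}\lim x_n$ means $\{n: x_n\in V\}\in p$ for every neighborhood $V$ of $y$. The Ellis semigroup $E(X,f)$ is the closure of $\{f^n:n\in\mathbb N\}$ in $X^X$ with the product (pointwise) topology; it equals $\{f^p:p\in\beta\mathbb N\}$. The $\omega$-limit set $\omega_f(x)$ is the set of limits of sequences $f^{n_k}(x)$ with $(n_k)$ strictly increasing. An accumulation point is a non-isolated point. *)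

theory Defs
  imports "HOL-Analysis.Analysis"
begin

text \<open>Free ultrafilters on the naturals (the elements of N*), as Isabelle filters on nat.\<close>
definition free_ultrafilter_nat :: "nat filter \<Rightarrow> bool" where
  "free_ultrafilter_nat p \<longleftrightarrow>
     p \<noteq> bot \<and>
     (\<forall>P. eventually P p \<or> eventually (\<lambda>n. \<not> P n) p) \<and>
     (\<forall>m. \<not> eventually (\<lambda>n. n = m) p)"

definition p_iterate :: "'a set \<Rightarrow> ('a::metric_space \<Rightarrow> 'a) \<Rightarrow> nat filter \<Rightarrow> 'a \<Rightarrow> 'a" where
  "p_iterate X f p = restrict (\<lambda>x. Lim p (\<lambda>n. (f ^^ n) x)) X"

definition omega_limit :: "('a::metric_space \<Rightarrow> 'a) \<Rightarrow> 'a \<Rightarrow> 'a set" where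
  "omega_limit f x = {y. \<exists>r. strict_mono r \<and> ((\<lambda>k. (f ^^ (r k)) x) \<longlonglongrightarrow> y)}"

definition transitive_system :: "'a set \<Rightarrow> ('a::metric_space \<Rightarrow> 'a) \<Rightarrow> bool" where
  "transitive_system X f \<longleftrightarrow> (\<exists>x\<in>X. closure {(f ^^ n) x | n. True} = X)"

text \<open>X^X with the product (pointwise) topology; maps are represented extensionally on X.\<close>
definition pointwise_top :: "'a::metric_space set \<Rightarrow> ('a \<Rightarrow> 'a) topology" where
  "pointwise_top X = product_topology (\<lambda>_. top_of_set X) X"

definition ellis_semigroup :: "'a set \<Rightarrow> ('a::metric_space \<Rightarrow> 'a) \<Rightarrow> ('a \<Rightarrow> 'a) set" where
  "ellis_semigroup X f = (pointwise_top X) closure_of {restrict (f ^^ n) X | n. True}"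

end

theory Submission
  imports Defs
begin

text \<open>
  Fix a point \<open>x\<^sub>0\<close> with dense orbit. Evaluation \<open>g \<mapsto> g x\<^sub>0\<close> is a continuous map from the
  compact space \<open>E(X,f)\<close>, a closed subspace of \<open>X\<^sup>X\<close>, to \<open>X\<close>; its image is compact and contains
  the orbit of \<open>x\<^sub>0\<close>, so it is all of \<open>X\<close>, and it only remains to show that evaluation is injective.
  Every element of \<open>E(X,f)\<close> is an iterate \<open>f\<^sup>m\<close> or a \<open>p\<close>-iterate for a free ultrafilter \<open>p\<close>, and it
  commutes with \<open>f\<close>, so its value at \<open>x\<^sub>0\<close> determines it on the orbit of \<open>x\<^sub>0\<close>. Under the first
  hypothesis all elements of \<open>E(X,f)\<close> are continuous, hence determined on the closure of the orbit.
  Under the second one, every point off the orbit is an accumulation point whose orbit converges, so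
  all \<open>p\<close>-iterates agree there; and no \<open>p\<close>-iterate agrees with an \<open>f\<^sup>m\<close> at \<open>x\<^sub>0\<close>: otherwise
  \<open>f\<^sup>m(x\<^sub>0)\<close> would be an accumulation point, hence the limit of the orbit of \<open>x\<^sub>0\<close>, hence a fixed point
  of \<open>f\<close>, although that orbit is infinite.
\<close>

section \<open>Ultrafilters\<close>

definition is_ultrafilter :: "'a filter \<Rightarrow> bool" where
  "is_ultrafilter U \<longleftrightarrow> U \<noteq> bot \<and> (\<forall>P. eventually P U \<or> eventually (\<lambda>x. \<not> P x) U)"

lemma free_ultrafilter_nat_iff:
  "free_ultrafilter_nat p \<longleftrightarrow> is_ultrafilter p \<and> (\<forall>m. \<not> eventually (\<lambda>n. n = m) p)"
  by (auto simp: free_ultrafilter_nat_def is_ultrafilter_def)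

lemma is_ultrafilter_if_maximal:
  assumes "U \<noteq> bot" and maximal: "\<And>G. G \<noteq> bot \<Longrightarrow> G \<le> U \<Longrightarrow> G = U"
  shows "is_ultrafilter U"
  unfolding is_ultrafilter_def
proof (intro conjI allI disjCI)
  fix P
  assume "\<not> eventually (\<lambda>x. \<not> P x) U"
  then have "inf U (principal {x. P x}) \<noteq> bot"
    by (simp add: trivial_limit_def eventually_inf_principal)
  then have "inf U (principal {x. P x}) = U"
    by (rule maximal) simp
  moreover have "eventually P (inf U (principal {x. P x}))"
    by (simp add: eventually_inf_principal)
  ultimately show "eventually P U"
    by simp
qed (fact assms)

lemma exists_ultrafilter_le:
  assumes "F \<noteq> bot"
  obtains U where "is_ultrafilter U" "U \<le> F"
proof -
  let ?A = "{G. G \<noteq> bot \<and> G \<le> F}"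
  have "\<exists>U\<in>?A. \<forall>G\<in>?A. G \<le> U \<longrightarrow> G = U"
  proof (rule predicate_Zorn)
    show "partial_order_on ?A (relation_of (\<lambda>G H. H \<le> G) ?A)"
      by (auto simp: partial_order_on_def preorder_on_def refl_on_def trans_def antisym_def
          relation_of_def)
    show "\<exists>U\<in>?A. \<forall>G\<in>C. U \<le> G" if C: "C \<in> Chains (relation_of (\<lambda>G H. H \<le> G) ?A)" for C
    proof (cases "C = {}")
      case True
      with assms show ?thesis by auto
    next
      case False
      have proper: "G \<noteq> bot" "G \<le> F" if "G \<in> C" for G
        using C that by (auto simp: Chains_def relation_of_def)
      have directed: "\<exists>K\<in>C. K \<le> inf G H" if "G \<in> C" "H \<in> C" for G H
        using C that by (auto simp: Chains_def relation_of_def intro: inf_absorb1 inf_absorb2)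
      have "Inf C \<noteq> bot"
        using eventually_Inf_base[OF False directed, of "\<lambda>_. False"] proper
        by (auto simp: trivial_limit_def)
      moreover obtain G where "G \<in> C"
        using False by blast
      ultimately show ?thesis
        using proper by (intro bexI[of _ "Inf C"]) (auto intro: Inf_lower Inf_lower2)
    qed
  qed
  then obtain U where U: "U \<in> ?A" and maximal: "\<And>G. G \<in> ?A \<Longrightarrow> G \<le> U \<Longrightarrow> G = U"
    by blast
  have "is_ultrafilter U"
    using U by (intro is_ultrafilter_if_maximal) (auto intro: maximal order_trans)
  with U show thesis
    using that by blast
qed

lemma limitin_ultrafilter_if_in_closure_of_range:
  assumes "l \<in> T closure_of range s"
  obtains U where "is_ultrafilter U" "limitin T s l U"
proof -
  let ?F = "filtercomap s (nhdsin T l)"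
  have "?F \<noteq> bot"
    using assms by (auto simp: trivial_limit_def eventually_filtercomap eventually_nhdsin in_closure_of)
  then obtain U where U: "is_ultrafilter U" "U \<le> ?F"
    by (rule exists_ultrafilter_le)
  have "l \<in> topspace T"
    using assms by (simp add: in_closure_of)
  moreover have "eventually (\<lambda>n. s n \<in> V) ?F" if "openin T V" "l \<in> V" for V
    using that by (intro eventually_filtercomapI) (auto simp: eventually_nhdsin)
  ultimately have "limitin T s l ?F"
    by (simp add: limitin_def)
  with U show thesis
    by (meson limitin_def filter_leD that)
qed

lemma free_ultrafilter_nat_le_sequentially:
  assumes "free_ultrafilter_nat p"
  shows "p \<le> sequentially"
proof -
  have "eventually (\<lambda>n. N \<le> n) p" for N
  proof (induction N)
    case (Suc N)
    moreover have "eventually (\<lambda>n. n \<noteq> N) p"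
      using assms by (auto simp: free_ultrafilter_nat_def)
    ultimately show ?case
      by eventually_elim auto
  qed simp
  then show ?thesis
    by (auto simp: le_sequentially)
qed

lemma tendsto_ultrafilter_in_compact:
  fixes s :: "'b \<Rightarrow> 'a::topological_space"
  assumes "compact X" "is_ultrafilter U" "\<And>n. s n \<in> X"
  obtains l where "l \<in> X" "(s \<longlongrightarrow> l) U"
proof -
  have "filtermap s U \<noteq> bot" "eventually (\<lambda>x. x \<in> X) (filtermap s U)"
    using assms by (auto simp: is_ultrafilter_def filtermap_bot_iff eventually_filtermap)
  then obtain l where l: "l \<in> X" "inf (nhds l) (filtermap s U) \<noteq> bot"
    using \<open>compact X\<close> unfolding compact_filter by blast
  have "(s \<longlongrightarrow> l) U"
  proof (rule topological_tendstoI, rule ccontr)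
    fix V
    assume "open V" "l \<in> V" "\<not> eventually (\<lambda>n. s n \<in> V) U"
    then have "eventually (\<lambda>x. x \<notin> V) (filtermap s U)"
      using \<open>is_ultrafilter U\<close> by (auto simp: is_ultrafilter_def eventually_filtermap)
    moreover have "eventually (\<lambda>x. x \<in> V) (nhds l)"
      using \<open>open V\<close> \<open>l \<in> V\<close> by (rule eventually_nhds_in_open)
    ultimately have "eventually (\<lambda>x. False) (inf (nhds l) (filtermap s U))"
      unfolding eventually_inf by blast
    with l(2) show False
      by (simp add: trivial_limit_def)
  qed
  with l(1) show thesis
    by (rule that)
qed

lemma free_ultrafilter_limit_islimpt:
  fixes s :: "nat \<Rightarrow> 'a::topological_space"
  assumes "free_ultrafilter_nat p" "inj s" "(s \<longlongrightarrow> z) p"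
  shows "z islimpt range s"
proof (rule islimptI)
  fix T
  assume "z \<in> T" "open T"
  then have "eventually (\<lambda>n. s n \<in> T) p"
    using topological_tendstoD[OF assms(3)] by blast
  moreover have "eventually (\<lambda>n. s n \<noteq> z) p"
  proof (cases "z \<in> range s")
    case True
    then obtain m where "z = s m"
      by blast
    then show ?thesis
      using assms(1,2) by (auto simp: free_ultrafilter_nat_def inj_eq)
  qed (auto intro: always_eventually)
  ultimately have "eventually (\<lambda>n. s n \<in> T \<and> s n \<noteq> z) p"
    by (rule eventually_conj)
  moreover have "p \<noteq> bot"
    using assms(1) by (simp add: free_ultrafilter_nat_def)
  ultimately obtain n where "s n \<in> T" "s n \<noteq> z"
    using eventually_happens' by blast
  then show "\<exists>y\<in>range s. y \<in> T \<and> y \<noteq> z"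
    by blast
qed

section \<open>Orbits and omega-limit sets\<close>

definition orbit :: "('a \<Rightarrow> 'a) \<Rightarrow> 'a \<Rightarrow> 'a set" where
  "orbit f x = range (\<lambda>n. (f ^^ n) x)"

lemma funpow_in:
  assumes "f ` X \<subseteq> X" "x \<in> X"
  shows "(f ^^ n) x \<in> X"
  using assms by (induction n) auto

lemma orbit_subset:
  assumes "f ` X \<subseteq> X" "x \<in> X"
  shows "orbit f x \<subseteq> X"
  using funpow_in[OF assms] by (auto simp: orbit_def)

lemma funpow_commute: "(f ^^ m) ((f ^^ n) x) = (f ^^ n) ((f ^^ m) x)"
  by (metis add.commute comp_apply funpow_add)

lemma continuous_on_funpow:
  assumes "continuous_on X f" "f ` X \<subseteq> X"
  shows "continuous_on X (f ^^ n)"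
proof (induction n)
  case (Suc n)
  have "(f ^^ n) ` X \<subseteq> X"
    using funpow_in[OF assms(2)] by blast
  with Suc show ?case
    by (auto intro: continuous_on_compose2[OF assms(1)])
qed (simp add: continuous_on_id)

lemma funpow_eq_funpow_below:
  fixes f :: "'a \<Rightarrow> 'a"
  assumes "i < j" "(f ^^ i) x = (f ^^ j) x"
  shows "\<exists>k'<j. (f ^^ k) x = (f ^^ k') x"
proof (induction k rule: less_induct)
  case (less k)
  show ?case
  proof (cases "k < j")
    case False
    then have "(f ^^ k) x = (f ^^ (k - j)) ((f ^^ j) x)"
      by (metis funpow_add le_add_diff_inverse2 not_less o_apply)
    also have "\<dots> = (f ^^ (k - j + i)) x"
      by (simp add: assms(2)[symmetric] funpow_add)
    finally show ?thesis
      using less[of "k - j + i"] False assms(1) by auto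
  qed auto
qed

lemma inj_funpow_if_infinite_orbit:
  assumes "infinite (orbit f x)"
  shows "inj (\<lambda>n. (f ^^ n) x)"
proof (rule injI, rule ccontr)
  fix i j
  assume "(f ^^ i) x = (f ^^ j) x" "i \<noteq> j"
  then obtain a b where "a < b" "(f ^^ a) x = (f ^^ b) x"
    by (metis linorder_neqE_nat)
  then have "orbit f x \<subseteq> (\<lambda>k. (f ^^ k) x) ` {..<b}"
    using funpow_eq_funpow_below by (fastforce simp: orbit_def)
  with assms show False
    using finite_subset by blast
qed

lemma tendsto_if_omega_limit_singleton:
  assumes "compact X" "f ` X \<subseteq> X" "x \<in> X" "omega_limit f x = {y}"
  shows "(\<lambda>n. (f ^^ n) x) \<longlonglongrightarrow> y"
proof (rule ccontr)
  let ?s = "\<lambda>n. (f ^^ n) x"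
  assume "\<not> ?s \<longlonglongrightarrow> y"
  then obtain e where "e > 0" "\<forall>N. \<exists>n\<ge>N. e \<le> dist (?s n) y"
    unfolding lim_sequentially by (meson not_less)
  then have "infinite {n. e \<le> dist (?s n) y}"
    by (simp add: infinite_nat_iff_unbounded_le)
  then have "\<exists>r::nat \<Rightarrow> nat. strict_mono r \<and> (\<forall>n. r n \<in> {n. e \<le> dist (?s n) y})"
    by (rule infinite_enumerate)
  then obtain r :: "nat \<Rightarrow> nat" where r: "strict_mono r" "\<forall>n. e \<le> dist (?s (r n)) y"
    by auto
  have "\<forall>n. (?s \<circ> r) n \<in> X"
    using funpow_in[OF assms(2,3)] by simp
  then obtain l r' where "l \<in> X" "strict_mono r'" and lim: "(?s \<circ> r \<circ> r') \<longlonglongrightarrow> l"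
    using \<open>compact X\<close> unfolding compact_def by blast
  have "l \<in> omega_limit f x"
    unfolding omega_limit_def using lim strict_mono_o[OF r(1) \<open>strict_mono r'\<close>]
    by (auto simp: comp_def)
  moreover have "e \<le> dist l y"
    using lim r(2) by (intro LIMSEQ_le_const[OF tendsto_dist[OF _ tendsto_const]]) auto
  ultimately show False
    using assms(4) \<open>e > 0\<close> by auto
qed

lemma fixed_point_if_orbit_tendsto:
  fixes f :: "'a::metric_space \<Rightarrow> 'a"
  assumes "closed X" "f ` X \<subseteq> X" "continuous_on X f" "x \<in> X"
    and lim: "(\<lambda>n. (f ^^ n) x) \<longlonglongrightarrow> y"
  shows "f y = y"
proof -
  have "y \<in> X"
    using closed_sequentially[OF \<open>closed X\<close> _ lim] funpow_in[OF assms(2,4)] by blast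
  then have "(\<lambda>n. f ((f ^^ n) x)) \<longlonglongrightarrow> f y"
    using funpow_in[OF assms(2,4)] by (intro continuous_on_tendsto_compose[OF assms(3) lim]) auto
  moreover have "(\<lambda>n. f ((f ^^ n) x)) \<longlonglongrightarrow> y"
    using LIMSEQ_Suc[OF lim] by simp
  ultimately show ?thesis
    by (rule LIMSEQ_unique)
qed

section \<open>p-iterates\<close>

lemma p_iterate_eqI:
  assumes "free_ultrafilter_nat p" "x \<in> X" "((\<lambda>n. (f ^^ n) x) \<longlongrightarrow> y) p"
  shows "p_iterate X f p x = y"
  using assms by (simp add: p_iterate_def free_ultrafilter_nat_def tendsto_Lim)

lemma p_iterate_eq_lim:
  assumes "free_ultrafilter_nat p" "x \<in> X" "(\<lambda>n. (f ^^ n) x) \<longlonglongrightarrow> y"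
  shows "p_iterate X f p x = y"
  using assms free_ultrafilter_nat_le_sequentially by (metis p_iterate_eqI tendsto_mono)

lemma tendsto_p_iterate:
  assumes "compact X" "f ` X \<subseteq> X" "free_ultrafilter_nat p" "x \<in> X"
  shows "p_iterate X f p x \<in> X" "((\<lambda>n. (f ^^ n) x) \<longlongrightarrow> p_iterate X f p x) p"
proof -
  obtain l where "l \<in> X" "((\<lambda>n. (f ^^ n) x) \<longlongrightarrow> l) p"
    using tendsto_ultrafilter_in_compact[OF assms(1)] funpow_in[OF assms(2,4)] assms(3)
    by (metis free_ultrafilter_nat_iff)
  moreover from this have "p_iterate X f p x = l"
    using p_iterate_eqI assms(3,4) by blast
  ultimately show "p_iterate X f p x \<in> X" "((\<lambda>n. (f ^^ n) x) \<longlongrightarrow> p_iterate X f p x) p"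
    by simp_all
qed

lemma p_iterate_funpow_commute:
  assumes "compact X" "f ` X \<subseteq> X" "continuous_on X f" "free_ultrafilter_nat p" "x \<in> X"
  shows "p_iterate X f p ((f ^^ k) x) = (f ^^ k) (p_iterate X f p x)"
proof (rule p_iterate_eqI[OF assms(4) funpow_in[OF assms(2,5)]])
  have "((\<lambda>n. (f ^^ k) ((f ^^ n) x)) \<longlongrightarrow> (f ^^ k) (p_iterate X f p x)) p"
    using tendsto_p_iterate[OF assms(1,2,4,5)] funpow_in[OF assms(2,5)]
    by (intro continuous_on_tendsto_compose[OF continuous_on_funpow[OF assms(3,2)]]) auto
  then show "((\<lambda>n. (f ^^ n) ((f ^^ k) x)) \<longlongrightarrow> (f ^^ k) (p_iterate X f p x)) p"
    by (simp only: funpow_commute)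
qed

section \<open>The Ellis semigroup\<close>

lemma topspace_pointwise_top: "topspace (pointwise_top X) = X \<rightarrow>\<^sub>E X"
  by (simp add: pointwise_top_def)

lemma continuous_map_pointwise_top_eval:
  "x \<in> X \<Longrightarrow> continuous_map (pointwise_top X) (top_of_set X) (\<lambda>g. g x)"
  unfolding pointwise_top_def by (rule continuous_map_product_projection)

lemma Hausdorff_space_pointwise_top: "Hausdorff_space (pointwise_top X)"
  by (simp add: pointwise_top_def Hausdorff_space_product_topology Hausdorff_space_subtopology)

lemma compact_space_pointwise_top: "compact X \<Longrightarrow> compact_space (pointwise_top X)"
  by (simp add: pointwise_top_def compact_space_product_topology compact_space_subtopology)

lemma p_iterate_eq_limitin:
  fixes f :: "'a::metric_space \<Rightarrow> 'a"
  assumes "free_ultrafilter_nat p" "limitin (pointwise_top X) (\<lambda>n. restrict (f ^^ n) X) g p"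
  shows "g = p_iterate X f p"
proof
  fix x
  show "g x = p_iterate X f p x"
  proof (cases "x \<in> X")
    case True
    have "limitin (top_of_set X) (\<lambda>n. restrict (f ^^ n) X x) (g x) p"
      using continuous_map_limit[OF continuous_map_pointwise_top_eval[OF True] assms(2)]
      by (simp add: o_def)
    with True have "((\<lambda>n. (f ^^ n) x) \<longlongrightarrow> g x) p"
      by (simp add: limitin_subtopology)
    then show ?thesis
      by (rule p_iterate_eqI[OF assms(1) True, symmetric])
  next
    case False
    moreover have "g \<in> X \<rightarrow>\<^sub>E X"
      using limitin_topspace[OF assms(2)] by (simp add: topspace_pointwise_top)
    ultimately show ?thesis
      by (auto simp: p_iterate_def)
  qed
qed

lemma ellis_semigroup_subset: "ellis_semigroup X f \<subseteq> X \<rightarrow>\<^sub>E X"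
  by (metis closure_of_subset_topspace ellis_semigroup_def topspace_pointwise_top)

lemma ellis_semigroup_eqI:
  assumes "g \<in> ellis_semigroup X f" "h \<in> ellis_semigroup X f" "\<And>x. x \<in> X \<Longrightarrow> g x = h x"
  shows "g = h"
proof (rule PiE_ext)
  show "g \<in> X \<rightarrow>\<^sub>E X" "h \<in> X \<rightarrow>\<^sub>E X"
    using assms(1,2) ellis_semigroup_subset by blast+
qed (use assms(3) in blast)

lemma restrict_funpow_in_ellis_semigroup:
  assumes "f ` X \<subseteq> X"
  shows "restrict (f ^^ n) X \<in> ellis_semigroup X f"
  unfolding ellis_semigroup_def
  by (rule closure_of_subset[THEN subsetD]) (use funpow_in[OF assms] in \<open>auto simp: topspace_pointwise_top\<close>)

lemma topspace_ellis_semigroup: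
  "topspace (subtopology (pointwise_top X) (ellis_semigroup X f)) = ellis_semigroup X f"
  by (metis closure_of_subset_topspace ellis_semigroup_def inf.absorb_iff2 topspace_subtopology)

lemma compact_space_ellis_semigroup:
  "compact X \<Longrightarrow> compact_space (subtopology (pointwise_top X) (ellis_semigroup X f))"
  by (simp add: ellis_semigroup_def closedin_compact_space compact_space_pointwise_top
      compact_space_subtopology)

lemma ellis_semigroup_cases:
  fixes f :: "'a::metric_space \<Rightarrow> 'a"
  assumes "f ` X \<subseteq> X" "g \<in> ellis_semigroup X f"
  obtains (funpow) m where "g = restrict (f ^^ m) X"
    | (p_iterate) p where "free_ultrafilter_nat p" "g = p_iterate X f p"
proof -
  let ?T = "pointwise_top X"
  let ?s = "\<lambda>n. restrict (f ^^ n) X"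
  have "g \<in> ?T closure_of range ?s"
    using assms(2) by (simp add: ellis_semigroup_def full_SetCompr_eq)
  then obtain U where U: "is_ultrafilter U" "limitin ?T ?s g U"
    by (rule limitin_ultrafilter_if_in_closure_of_range)
  show thesis
  proof (cases "\<exists>m. eventually (\<lambda>n. n = m) U")
    case True
    then obtain m where "eventually (\<lambda>n. n = m) U"
      by blast
    then have "eventually (\<lambda>n. ?s n = ?s m) U"
      by (rule eventually_mono) simp
    moreover have "?s m \<in> topspace ?T"
      using funpow_in[OF assms(1)] by (auto simp: topspace_pointwise_top)
    ultimately have "limitin ?T ?s (?s m) U"
      by (rule limitin_eventually[rotated])
    with U have "g = ?s m"
      using Hausdorff_space_pointwise_top
      by (intro limitin_Hausdorff_unique[OF U(2)]) (auto simp: is_ultrafilter_def)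
    then show thesis
      by (rule funpow)
  next
    case False
    with U(1) have "free_ultrafilter_nat U"
      by (simp add: free_ultrafilter_nat_iff)
    with U(2) show thesis
      using p_iterate_eq_limitin p_iterate by blast
  qed
qed

lemma ellis_semigroup_funpow_commute:
  fixes f :: "'a::metric_space \<Rightarrow> 'a"
  assumes "compact X" "f ` X \<subseteq> X" "continuous_on X f" "g \<in> ellis_semigroup X f" "x \<in> X"
  shows "g ((f ^^ k) x) = (f ^^ k) (g x)"
  using assms(2,4)
proof (cases rule: ellis_semigroup_cases)
  case (funpow m)
  then show ?thesis
    using assms(5) funpow_in[OF assms(2,5)] by (simp add: funpow_commute)
next
  case (p_iterate p)
  then show ?thesis
    using p_iterate_funpow_commute[OF assms(1-3) _ assms(5)] by simp
qed

lemma ellis_semigroup_eq_on_orbit: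
  fixes f :: "'a::metric_space \<Rightarrow> 'a"
  assumes "compact X" "f ` X \<subseteq> X" "continuous_on X f" "x \<in> X"
    and "g \<in> ellis_semigroup X f" "h \<in> ellis_semigroup X f" "g x = h x" "y \<in> orbit f x"
  shows "g y = h y"
proof -
  obtain n where "y = (f ^^ n) x"
    using assms(8) by (auto simp: orbit_def)
  then show ?thesis
    using assms(4-7) ellis_semigroup_funpow_commute[OF assms(1-3)] by metis
qed

lemma eval_ellis_semigroup_image:
  assumes "compact X" "f ` X \<subseteq> X" "x0 \<in> X" "closure (orbit f x0) = X"
  shows "(\<lambda>g. g x0) ` ellis_semigroup X f = X"
proof
  let ?E = "ellis_semigroup X f"
  show "(\<lambda>g. g x0) ` ?E \<subseteq> X"
    using ellis_semigroup_subset assms(3) by fastforce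
  have "compactin (subtopology (pointwise_top X) ?E) ?E"
    using compact_space_ellis_semigroup[OF assms(1)]
    by (metis compact_space_def topspace_ellis_semigroup)
  then have "compactin (top_of_set X) ((\<lambda>g. g x0) ` ?E)"
    by (rule image_compactin)
      (rule continuous_map_from_subtopology[OF continuous_map_pointwise_top_eval[OF assms(3)]])
  then have "closed ((\<lambda>g. g x0) ` ?E)"
    by (simp add: compactin_subtopology compact_imp_closed)
  moreover have "orbit f x0 \<subseteq> (\<lambda>g. g x0) ` ?E"
  proof
    fix y
    assume "y \<in> orbit f x0"
    then obtain n where "y = restrict (f ^^ n) X x0"
      using assms(3) by (auto simp: orbit_def)
    then show "y \<in> (\<lambda>g. g x0) ` ?E"
      using restrict_funpow_in_ellis_semigroup[OF assms(2)] by blast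
  qed
  ultimately show "X \<subseteq> (\<lambda>g. g x0) ` ?E"
    using closure_minimal assms(4) by blast
qed

lemma ellis_semigroup_homeomorphic_if_inj_eval:
  assumes "compact X" "f ` X \<subseteq> X" "x0 \<in> X" "closure (orbit f x0) = X"
    and "inj_on (\<lambda>g. g x0) (ellis_semigroup X f)"
  shows "subtopology (pointwise_top X) (ellis_semigroup X f) homeomorphic_space top_of_set X"
proof -
  have "homeomorphic_map (subtopology (pointwise_top X) (ellis_semigroup X f)) (top_of_set X)
    (\<lambda>g. g x0)"
  proof (rule continuous_imp_homeomorphic_map)
    show "continuous_map (subtopology (pointwise_top X) (ellis_semigroup X f)) (top_of_set X)
      (\<lambda>g. g x0)"
      using assms(3) by (intro continuous_map_from_subtopology continuous_map_pointwise_top_eval)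
  qed (use assms eval_ellis_semigroup_image[OF assms(1-4)] in
      \<open>simp_all add: topspace_ellis_semigroup compact_space_ellis_semigroup Hausdorff_space_subtopology
        del: topspace_subtopology\<close>)
  then show ?thesis
    by (metis homeomorphic_map_maps homeomorphic_space_def)
qed

lemma ellis_semigroup_continuous_on:
  fixes f :: "'a::metric_space \<Rightarrow> 'a"
  assumes "f ` X \<subseteq> X" "continuous_on X f"
    and "\<forall>p. free_ultrafilter_nat p \<longrightarrow>
           continuous_map (top_of_set X) (top_of_set X) (p_iterate X f p)"
    and "g \<in> ellis_semigroup X f"
  shows "continuous_on X g"
  using assms(1,4)
proof (cases rule: ellis_semigroup_cases)
  case (funpow m)
  then show ?thesis
    using continuous_on_funpow[OF assms(2,1)] by (auto intro: continuous_on_eq)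
next
  case (p_iterate p)
  then show ?thesis
    using assms(3) by simp
qed

lemma inj_on_eval_ellis_semigroup_if_continuous:
  fixes f :: "'a::metric_space \<Rightarrow> 'a"
  assumes "compact X" "f ` X \<subseteq> X" "continuous_on X f" "x0 \<in> X" "closure (orbit f x0) = X"
    and "\<And>g. g \<in> ellis_semigroup X f \<Longrightarrow> continuous_on X g"
  shows "inj_on (\<lambda>g. g x0) (ellis_semigroup X f)"
proof (rule inj_onI)
  fix g h
  assume g: "g \<in> ellis_semigroup X f" and h: "h \<in> ellis_semigroup X f" and "g x0 = h x0"
  let ?A = "{x \<in> X. dist (g x) (h x) = 0}"
  have "closedin (top_of_set X) ?A"
    using assms(6)[OF g] assms(6)[OF h]
    by (intro continuous_closedin_preimage_constant continuous_on_dist)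
  then have "closed ?A"
    using compact_imp_closed[OF assms(1)] closedin_closed_trans by blast
  moreover have "orbit f x0 \<subseteq> ?A"
    using ellis_semigroup_eq_on_orbit[OF assms(1-4) g h \<open>g x0 = h x0\<close>]
      orbit_subset[OF assms(2,4)] by auto
  ultimately have "X \<subseteq> ?A"
    using closure_minimal assms(5) by blast
  then show "g = h"
    using g h by (intro ellis_semigroup_eqI) auto
qed

lemma p_iterate_ne_funpow:
  fixes f :: "'a::metric_space \<Rightarrow> 'a"
  assumes "compact X" "f ` X \<subseteq> X" "continuous_on X f" "x \<in> X" "inj (\<lambda>n. (f ^^ n) x)"
    and convergent: "\<And>z. z \<in> X \<Longrightarrow> z islimpt X \<Longrightarrow> convergent (\<lambda>n. (f ^^ n) z)"
    and "free_ultrafilter_nat p"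
  shows "p_iterate X f p x \<noteq> (f ^^ m) x"
proof
  let ?z = "(f ^^ m) x"
  assume eq: "p_iterate X f p x = ?z"
  then have "((\<lambda>n. (f ^^ n) x) \<longlongrightarrow> ?z) p"
    using tendsto_p_iterate(2)[OF assms(1,2,7,4)] by simp
  then have "?z islimpt X"
    using free_ultrafilter_limit_islimpt[OF assms(7,5)] orbit_subset[OF assms(2,4)]
    by (auto simp: orbit_def intro: islimpt_subset)
  then obtain w where "(\<lambda>n. (f ^^ n) ?z) \<longlonglongrightarrow> w"
    using convergent funpow_in[OF assms(2,4)] by (auto simp: convergent_def)
  then have "(\<lambda>n. (f ^^ (n + m)) x) \<longlonglongrightarrow> w"
    by (simp add: funpow_add)
  then have w: "(\<lambda>n. (f ^^ n) x) \<longlonglongrightarrow> w"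
    by (rule LIMSEQ_offset)
  then have "?z = w"
    using p_iterate_eq_lim[OF assms(7,4)] eq by simp
  moreover have "f w = w"
    using fixed_point_if_orbit_tendsto[OF compact_imp_closed[OF assms(1)] assms(2-4) w] .
  ultimately have "(f ^^ Suc m) x = (f ^^ m) x"
    by simp
  with assms(5) have "Suc m = m"
    by (rule injD)
  then show False
    by simp
qed

lemma ellis_semigroup_eq_restrict_funpow:
  fixes f :: "'a::metric_space \<Rightarrow> 'a"
  assumes "compact X" "f ` X \<subseteq> X" "continuous_on X f" "x0 \<in> X" "inj (\<lambda>n. (f ^^ n) x0)"
    and "\<And>z. z \<in> X \<Longrightarrow> z islimpt X \<Longrightarrow> convergent (\<lambda>n. (f ^^ n) z)"
    and "g \<in> ellis_semigroup X f" "g x0 = (f ^^ m) x0"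
  shows "g = restrict (f ^^ m) X"
  using assms(2,7)
proof (cases rule: ellis_semigroup_cases)
  case (funpow k)
  with assms(4,5,8) have "k = m"
    by (auto dest: injD)
  with funpow show ?thesis
    by simp
next
  case (p_iterate p)
  then show ?thesis
    using p_iterate_ne_funpow[OF assms(1-6)] assms(8) by blast
qed

lemma ellis_semigroup_apply_eq_lim:
  fixes f :: "'a::metric_space \<Rightarrow> 'a"
  assumes "f ` X \<subseteq> X" "x0 \<in> X" "g \<in> ellis_semigroup X f" "g x0 \<notin> orbit f x0"
    and "x \<in> X" "(\<lambda>n. (f ^^ n) x) \<longlonglongrightarrow> y"
  shows "g x = y"
  using assms(1,3)
proof (cases rule: ellis_semigroup_cases)
  case (funpow m)
  with assms(2,4) show ?thesis
    by (simp add: orbit_def)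
next
  case (p_iterate p)
  with assms(5,6) show ?thesis
    by (simp add: p_iterate_eq_lim)
qed

lemma ellis_semigroup_eq_at_convergent:
  fixes f :: "'a::metric_space \<Rightarrow> 'a"
  assumes "compact X" "f ` X \<subseteq> X" "continuous_on X f" "x0 \<in> X" "inj (\<lambda>n. (f ^^ n) x0)"
    and convergent: "\<And>z. z \<in> X \<Longrightarrow> z islimpt X \<Longrightarrow> convergent (\<lambda>n. (f ^^ n) z)"
    and g: "g \<in> ellis_semigroup X f" and h: "h \<in> ellis_semigroup X f" and "g x0 = h x0"
    and "x \<in> X" "convergent (\<lambda>n. (f ^^ n) x)"
  shows "g x = h x"
proof (cases "g x0 \<in> orbit f x0")
  case True
  then obtain m where "g x0 = (f ^^ m) x0"
    by (auto simp: orbit_def)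
  then have "g = restrict (f ^^ m) X" "h = restrict (f ^^ m) X"
    using ellis_semigroup_eq_restrict_funpow[OF assms(1-6)] g h \<open>g x0 = h x0\<close> by auto
  then show ?thesis
    by simp
next
  case False
  obtain y where "(\<lambda>n. (f ^^ n) x) \<longlonglongrightarrow> y"
    using \<open>convergent (\<lambda>n. (f ^^ n) x)\<close> by (auto simp: convergent_def)
  then show ?thesis
    using ellis_semigroup_apply_eq_lim[OF assms(2,4) _ _ \<open>x \<in> X\<close>] g h \<open>g x0 = h x0\<close> False
    by metis
qed

lemma inj_on_eval_ellis_semigroup_if_omega_limits_singletons:
  fixes f :: "'a::metric_space \<Rightarrow> 'a"
  assumes "compact X" "f ` X \<subseteq> X" "continuous_on X f" "x0 \<in> X" "closure (orbit f x0) = X"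
    and "\<forall>x\<in>X. x islimpt X \<longrightarrow> card (omega_limit f x) = 1"
  shows "inj_on (\<lambda>g. g x0) (ellis_semigroup X f)"
proof (rule inj_onI)
  fix g h
  assume g: "g \<in> ellis_semigroup X f" and h: "h \<in> ellis_semigroup X f" and "g x0 = h x0"
  have convergent: "convergent (\<lambda>n. (f ^^ n) z)" if "z \<in> X" "z islimpt X" for z
    using assms(6) that tendsto_if_omega_limit_singleton[OF assms(1,2) \<open>z \<in> X\<close>]
    by (metis card_1_singletonE convergent_def)
  have "g x = h x" if "x \<in> X" for x
  proof (cases "x \<in> orbit f x0")
    case True
    then show ?thesis
      using ellis_semigroup_eq_on_orbit[OF assms(1-4) g h \<open>g x0 = h x0\<close>] by blast
  next
    case False
    with \<open>x \<in> X\<close> assms(5) have "x islimpt orbit f x0"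
      by (auto simp: closure_def)
    then have "infinite (orbit f x0)"
      using islimpt_finite by blast
    then have "inj (\<lambda>n. (f ^^ n) x0)"
      by (rule inj_funpow_if_infinite_orbit)
    moreover have "x islimpt X"
      using \<open>x islimpt orbit f x0\<close> orbit_subset[OF assms(2,4)] by (rule islimpt_subset)
    ultimately show ?thesis
      using ellis_semigroup_eq_at_convergent[OF assms(1-4) _ convergent g h \<open>g x0 = h x0\<close>]
        convergent \<open>x \<in> X\<close> by blast
  qed
  with g h show "g = h"
    by (rule ellis_semigroup_eqI)
qed

theorem theorem4p2:
  fixes X :: "'a::metric_space set" and f :: "'a \<Rightarrow> 'a"
  assumes "compact X" and "countable X"
    and "f ` X \<subseteq> X" and "continuous_on X f"
    and "transitive_system X f"
    and "(\<forall>p. free_ultrafilter_nat p \<longrightarrow>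
             continuous_map (top_of_set X) (top_of_set X) (p_iterate X f p))
         \<or> (\<forall>x\<in>X. x islimpt X \<longrightarrow> card (omega_limit f x) = 1)"
  shows "subtopology (pointwise_top X) (ellis_semigroup X f) homeomorphic_space top_of_set X"
proof -
  note X = assms(1,3,4)
  obtain x0 where x0: "x0 \<in> X" "closure (orbit f x0) = X"
    using assms(5) by (auto simp: transitive_system_def orbit_def full_SetCompr_eq)
  have "inj_on (\<lambda>g. g x0) (ellis_semigroup X f)"
    using assms(6)
  proof
    assume "\<forall>p. free_ultrafilter_nat p \<longrightarrow>
              continuous_map (top_of_set X) (top_of_set X) (p_iterate X f p)"
    then have "\<And>g. g \<in> ellis_semigroup X f \<Longrightarrow> continuous_on X g"
      using ellis_semigroup_continuous_on[OF assms(3,4)] by blast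
    then show ?thesis
      by (rule inj_on_eval_ellis_semigroup_if_continuous[OF X x0])
  next
    assume "\<forall>x\<in>X. x islimpt X \<longrightarrow> card (omega_limit f x) = 1"
    then show ?thesis
      by (rule inj_on_eval_ellis_semigroup_if_omega_limits_singletons[OF X x0])
  qed
  then show ?thesis
    by (rule ellis_semigroup_homeomorphic_if_inj_eval[OF assms(1,3) x0])
qed

end
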